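(* Let $0\le\gamma<\alpha<\infty$. There exists a constant $C(\gamma,\alpha)>0$ such that for all $\zeta\in\overline{\mathbb{D}}$ and all $0<r<1$, $$D^{-\gamma}\frac{1}{|1-r\zeta|^{\alpha}}\le\frac{C(\gamma,\alpha)}{|1-r\zeta|^{\alpha-\gamma}},$$ where the fractional integral is taken in the variable $r$ (with $\zeta$ fixed).
   Context: $\mathbb{D}$ is the open unit disk. For a function $u$ integrable on $(0,a)$ and $\gamma>0$, the Riemann–Liouville fractional integral is $D^{-\gamma}u(r)=\frac{1}{\Gamma(\gamma)}\int_0^r (r-x)^{\gamma-1}u(x)\,dx$, $0<r<a$; and $D^{0}u=u$. Thus for $\gamma>0$ the left-hand side equals $\frac{1}{\Gamma(\gamma)}\int_0^r (r-x)^{\gamma-1}|1-x\zeta|^{-\alpha}\,dx$. *)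

theory Defs
  imports "HOL-Analysis.Analysis"
begin

definition frac_int :: "real \<Rightarrow> (real \<Rightarrow> real) \<Rightarrow> real \<Rightarrow> real" where
  "frac_int \<gamma> u r =
     (if \<gamma> = 0 then u r
      else (1 / Gamma \<gamma>) * (LBINT x:{0..r}. (r - x) powr (\<gamma> - 1) * u x))"

end

theory Submission imports Defs begin

text \<open>With \<open>d = |1 - r\<zeta>|\<close>, the triangle inequality gives
  \<open>|1 - x\<zeta>| \<ge> max (r - x) (d/2)\<close> for \<open>0 \<le> x \<le> r\<close>. Split the fractional integral at
  \<open>x = r - d/2\<close>: near \<open>r\<close> the integrand is at most \<open>(d/2) powr -\<alpha> * (r - x) powr (\<gamma> - 1)\<close>,
  further away at most \<open>(r - x) powr (\<gamma> - 1 - \<alpha>)\<close>. Since \<open>0 < \<gamma> < \<alpha>\<close> both pieces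
  integrate to \<open>O(d powr (\<gamma> - \<alpha>))\<close>.\<close>

lemma has_integral_powr_diff_right:
  fixes e c r :: real
  assumes "e > -1" "c \<le> r"
  shows "((\<lambda>x. (r - x) powr e) has_integral (r - c) powr (e + 1) / (e + 1)) {c..r}"
proof -
  have "((\<lambda>x. x powr e) has_integral (r - c) powr (e + 1) / (e + 1)) {0..r - c}"
    using has_integral_powr_from_0[of e "r - c"] assms by simp
  then have "((\<lambda>x. (-x) powr e) has_integral (r - c) powr (e + 1) / (e + 1)) {-(r - c)..-0}"
    by (rule has_integral_reflect_lemma_real)
  then have "((\<lambda>x. (-(x + -r)) powr e) has_integral (r - c) powr (e + 1) / (e + 1))
      {-(r - c) - -r..-0 - -r}"
    by (rule has_integral_shift_real_ivl)
  then show ?thesis by simp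
qed

lemma has_integral_powr_diff_right_below:
  fixes e b c r :: real
  assumes "e \<noteq> -1" "b \<le> c" "c < r"
  shows "((\<lambda>x. (r - x) powr e) has_integral
           ((r - b) powr (e + 1) - (r - c) powr (e + 1)) / (e + 1)) {b..c}"
proof -
  define F where "F = (\<lambda>x. -((r - x) powr (e + 1)) / (e + 1))"
  have "((\<lambda>x. (r - x) powr e) has_integral (F c - F b)) {b..c}"
  proof (rule fundamental_theorem_of_calculus)
    fix x assume "x \<in> {b..c}"
    then have "r - x > 0" using assms by auto
    then show "(F has_vector_derivative (r - x) powr e) (at x within {b..c})"
      using assms unfolding F_def
      by (auto intro!: derivative_eq_intros
               simp flip: has_real_derivative_iff_has_vector_derivative)
  qed (use assms in auto)
  moreover have "F c - F b = ((r - b) powr (e + 1) - (r - c) powr (e + 1)) / (e + 1)"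
    unfolding F_def by (simp add: diff_divide_distrib)
  ultimately show ?thesis by metis
qed

lemma integral_le_singular_kernel:
  fixes \<gamma> \<alpha> r a :: real and f :: "real \<Rightarrow> real"
  assumes \<gamma>: "0 < \<gamma>" "\<gamma> < \<alpha>" and a: "0 < a" and r: "0 < r"
    and f_int: "f integrable_on {0..r}"
    and f_le: "\<And>x. x \<in> {0..r} \<Longrightarrow> f x \<le> (r - x) powr (\<gamma> - 1) * max (r - x) a powr (-\<alpha>)"
  shows "integral {0..r} f \<le> a powr (\<gamma> - \<alpha>) * (1 / \<gamma> + 1 / (\<alpha> - \<gamma>))"
proof -
  have near: "integral {c..r} f \<le> a powr (\<gamma> - \<alpha>) / \<gamma>"
    if c: "0 \<le> c" "c \<le> r" "r - c \<le> a" for c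
  proof -
    have I: "((\<lambda>x. (r - x) powr (\<gamma> - 1) * a powr (-\<alpha>)) has_integral
        (r - c) powr \<gamma> / \<gamma> * a powr (-\<alpha>)) {c..r}"
      using has_integral_mult_left[OF has_integral_powr_diff_right[of "\<gamma> - 1" c r]] \<gamma> c
      by simp
    have "f x \<le> (r - x) powr (\<gamma> - 1) * a powr (-\<alpha>)" if "x \<in> {c..r}" for x
    proof -
      have "max (r - x) a powr (-\<alpha>) \<le> a powr (-\<alpha>)"
        using a \<gamma> by (intro powr_mono2') auto
      then show ?thesis
        using f_le[of x] that c by (smt (verit) mult_left_mono powr_ge_zero atLeastAtMost_iff)
    qed
    then have "integral {c..r} f \<le> (r - c) powr \<gamma> / \<gamma> * a powr (-\<alpha>)"
      using integral_le[OF integrable_on_subinterval[OF f_int] has_integral_integrable[OF I]]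
        integral_unique[OF I] c by auto
    also have "\<dots> \<le> a powr \<gamma> / \<gamma> * a powr (-\<alpha>)"
      using c \<gamma> by (intro mult_right_mono divide_right_mono powr_mono2) auto
    also have "\<dots> = a powr (\<gamma> - \<alpha>) / \<gamma>"
      by (simp add: powr_add[symmetric])
    finally show ?thesis .
  qed
  show ?thesis
  proof (cases "r \<le> a")
    case True
    then have "integral {0..r} f \<le> a powr (\<gamma> - \<alpha>) / \<gamma>"
      using near[of 0] r by simp
    moreover have "0 \<le> a powr (\<gamma> - \<alpha>) / (\<alpha> - \<gamma>)" using \<gamma> by simp
    ultimately show ?thesis by (simp add: distrib_left)
  next
    case False
    define c where "c = r - a"
    have c: "0 \<le> c" "c < r" "r - c = a" using False a unfolding c_def by auto
    have I: "((\<lambda>x. (r - x) powr (\<gamma> - 1 - \<alpha>)) has_integral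
        (r powr (\<gamma> - \<alpha>) - a powr (\<gamma> - \<alpha>)) / (\<gamma> - \<alpha>)) {0..c}"
      using has_integral_powr_diff_right_below[of "\<gamma> - 1 - \<alpha>" 0 c r] \<gamma> c by simp
    have "f x \<le> (r - x) powr (\<gamma> - 1 - \<alpha>)" if "x \<in> {0..c}" for x
    proof -
      have "r - x \<ge> a" "r - x > 0" using that c a by auto
      then have "(r - x) powr (\<gamma> - 1) * max (r - x) a powr (-\<alpha>) = (r - x) powr (\<gamma> - 1 - \<alpha>)"
        by (simp add: max_absorb1 powr_add[symmetric])
      then show ?thesis using f_le[of x] that c by auto
    qed
    then have "integral {0..c} f \<le> (r powr (\<gamma> - \<alpha>) - a powr (\<gamma> - \<alpha>)) / (\<gamma> - \<alpha>)"
      using integral_le[OF integrable_on_subinterval[OF f_int] has_integral_integrable[OF I]]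
        integral_unique[OF I] c by auto
    also have "\<dots> \<le> a powr (\<gamma> - \<alpha>) / (\<alpha> - \<gamma>)"
      using \<gamma> by (auto simp: field_simps intro!: mult_right_mono)
    finally have far: "integral {0..c} f \<le> a powr (\<gamma> - \<alpha>) / (\<alpha> - \<gamma>)" .
    have "integral {0..r} f = integral {0..c} f + integral {c..r} f"
      using Henstock_Kurzweil_Integration.integral_combine[OF c(1) _ f_int] c by simp
    then show ?thesis using far near[of c] c by (simp add: field_simps)
  qed
qed

lemma set_integral_le_of_integral_le:
  fixes f :: "real \<Rightarrow> real" and S :: "real set"
  assumes "0 \<le> B" and "f integrable_on S \<Longrightarrow> integral S f \<le> B"
  shows "(LBINT x:S. f x) \<le> B"
proof (cases "set_integrable lborel S f")
  case True
  then show ?thesis using assms set_borel_integral_eq_integral[OF True] by simp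
next
  case False
  then show ?thesis using assms(1)
    by (simp add: set_lebesgue_integral_def set_integrable_def not_integrable_integral_eq)
qed

lemma norm_one_minus_scaled_ge:
  fixes \<zeta> :: complex and x :: real
  assumes "norm \<zeta> \<le> 1" "0 \<le> x"
  shows "1 - x \<le> norm (1 - complex_of_real x * \<zeta>)"
proof -
  have "norm (complex_of_real x * \<zeta>) \<le> x"
    using assms by (simp add: norm_mult mult_left_le)
  then show ?thesis
    using norm_triangle_ineq2[of 1 "complex_of_real x * \<zeta>"] by simp
qed

lemma norm_one_minus_scaled_ge_max:
  fixes \<zeta> :: complex and r x :: real
  assumes \<zeta>: "norm \<zeta> \<le> 1" and x: "0 \<le> x" "x \<le> r" "r < 1"
  shows "max (r - x) (norm (1 - complex_of_real r * \<zeta>) / 2) \<le> norm (1 - complex_of_real x * \<zeta>)"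
proof -
  have lower: "1 - x \<le> norm (1 - complex_of_real x * \<zeta>)"
    using norm_one_minus_scaled_ge[OF \<zeta> x(1)] .
  have "1 - complex_of_real r * \<zeta> = (1 - complex_of_real x * \<zeta>) - complex_of_real (r - x) * \<zeta>"
    by (simp add: algebra_simps)
  then have "norm (1 - complex_of_real r * \<zeta>)
      \<le> norm (1 - complex_of_real x * \<zeta>) + norm (complex_of_real (r - x) * \<zeta>)"
    by (metis norm_triangle_ineq4)
  also have "norm (complex_of_real (r - x) * \<zeta>) \<le> r - x"
    using \<zeta> x by (simp only: norm_mult norm_of_real) (simp add: mult_left_le)
  finally show ?thesis using lower x by linarith
qed

lemma frac_int_kernel_bound:
  fixes \<gamma> \<alpha> r :: real and \<zeta> :: complex
  assumes \<gamma>: "0 < \<gamma>" "\<gamma> < \<alpha>" and \<zeta>: "norm \<zeta> \<le> 1" and r: "0 < r" "r < 1"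
  shows "frac_int \<gamma> (\<lambda>x. 1 / norm (1 - complex_of_real x * \<zeta>) powr \<alpha>) r
           \<le> 2 powr (\<alpha> - \<gamma>) * (1 / \<gamma> + 1 / (\<alpha> - \<gamma>)) / Gamma \<gamma>
               / norm (1 - complex_of_real r * \<zeta>) powr (\<alpha> - \<gamma>)"
proof -
  define d where "d = norm (1 - complex_of_real r * \<zeta>)"
  define f where "f = (\<lambda>x. (r - x) powr (\<gamma> - 1) / norm (1 - complex_of_real x * \<zeta>) powr \<alpha>)"
  have "d \<ge> 1 - r" using norm_one_minus_scaled_ge[OF \<zeta>, of r] r unfolding d_def by simp
  then have d: "d > 0" using r by simp
  have f_le: "f x \<le> (r - x) powr (\<gamma> - 1) * max (r - x) (d / 2) powr (-\<alpha>)" if "x \<in> {0..r}" for x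
  proof -
    have "max (r - x) (d / 2) \<le> norm (1 - complex_of_real x * \<zeta>)"
      using norm_one_minus_scaled_ge_max[OF \<zeta>, of x r] that r unfolding d_def by simp
    moreover have "0 < max (r - x) (d / 2)" using d by simp
    ultimately have "1 / norm (1 - complex_of_real x * \<zeta>) powr \<alpha> \<le> 1 / max (r - x) (d / 2) powr \<alpha>"
      using \<gamma> by (intro divide_left_mono powr_mono2 mult_pos_pos) auto
    then have "1 / norm (1 - complex_of_real x * \<zeta>) powr \<alpha> \<le> max (r - x) (d / 2) powr (-\<alpha>)"
      by (simp add: powr_minus_divide)
    from mult_left_mono[OF this, of "(r - x) powr (\<gamma> - 1)"] show ?thesis
      unfolding f_def by simp
  qed
  have "frac_int \<gamma> (\<lambda>x. 1 / norm (1 - complex_of_real x * \<zeta>) powr \<alpha>) r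
      = (LBINT x:{0..r}. f x) / Gamma \<gamma>"
    unfolding frac_int_def f_def using \<gamma> by simp
  also have "\<dots> \<le> (d / 2) powr (\<gamma> - \<alpha>) * (1 / \<gamma> + 1 / (\<alpha> - \<gamma>)) / Gamma \<gamma>"
    using \<gamma> d r f_le
    by (intro divide_right_mono set_integral_le_of_integral_le integral_le_singular_kernel)
       (auto simp: Gamma_real_pos less_imp_le)
  also have "(d / 2) powr (\<gamma> - \<alpha>) = 2 powr (\<alpha> - \<gamma>) / d powr (\<alpha> - \<gamma>)"
    using d by (simp add: powr_divide powr_minus_divide[symmetric] powr_diff field_simps)
  finally show ?thesis unfolding d_def by (simp add: field_simps)
qed

theorem lemma2:
  fixes \<gamma> \<alpha> :: real
  assumes "0 \<le> \<gamma>" and "\<gamma> < \<alpha>"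
  shows "\<exists>C>0. \<forall>\<zeta>::complex. \<forall>r::real. norm \<zeta> \<le> 1 \<longrightarrow> 0 < r \<longrightarrow> r < 1 \<longrightarrow>
           frac_int \<gamma> (\<lambda>x. 1 / norm (1 - complex_of_real x * \<zeta>) powr \<alpha>) r
             \<le> C / norm (1 - complex_of_real r * \<zeta>) powr (\<alpha> - \<gamma>)"
proof (cases "\<gamma> = 0")
  case True
  then show ?thesis by (intro exI[of _ 1]) (simp add: frac_int_def)
next
  case False
  with assms have \<gamma>: "0 < \<gamma>" "\<gamma> < \<alpha>" by auto
  define C where "C = 2 powr (\<alpha> - \<gamma>) * (1 / \<gamma> + 1 / (\<alpha> - \<gamma>)) / Gamma \<gamma>"
  have "C > 0" using \<gamma> unfolding C_def by (simp add: Gamma_real_pos add_pos_pos)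
  then show ?thesis
    using frac_int_kernel_bound[OF \<gamma>] unfolding C_def by blast
qed

end
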